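(* Every join-congruence uniform left modular lattice is join-extremal, and every meet-congruence uniform left modular lattice is meet-extremal. Moreover, a congruence uniform lattice is extremal if and only if it is left modular.
   Context: All lattices are finite. For a convex subset $C$ of a lattice $L$, let $I_L(C)=\{y\in L\mid\exists x\in C,\ y\le x\}$, and the doubling $L[C]$ is the subposet of $L\times\{0<1\}$ on $\big(I_L(C)\times\{0\}\big)\sqcup\big(((L\setminus I_L(C))\cup C)\times\{1\}\big)$. A lattice is join-congruence uniform (resp. meet-congruence uniform, congruence uniform) if it is obtained from the one-element lattice by successive doublings of nonempty lower pseudo-intervals (resp. upper pseudo-intervals, intervals); a lower (resp. upper) pseudo-interval is a convex union of intervals sharing the same minimum (resp. maximum). A lattice is join-extremal (resp. meet-extremal) if its length (maximum number of elements of a chain minus one) equals its number of join-irreducible (resp. meet-irreducible) elements, and extremal if both hold. An element $a$ is left modular if for all $b<c$, $(b\vee a)\wedge c=b\vee(a\wedge c)$; a lattice is left modular if it has a maximal chain of left modular elements. *)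

theory Defs
  imports "HOL-Algebra.Lattice"
begin

text \<open>Finite lattices are represented as HOL-Algebra gorder records whose
  equality is genuine equality (locale partial_order), which are lattices,
  finite and nonempty.\<close>

definition fin_lattice :: "'a gorder \<Rightarrow> bool" where
  "fin_lattice L \<longleftrightarrow> lattice L \<and> finite (carrier L) \<and> carrier L \<noteq> {}"

definition convex_in :: "'a gorder \<Rightarrow> 'a set \<Rightarrow> bool" where
  "convex_in L C \<longleftrightarrow> C \<subseteq> carrier L \<and>
     (\<forall>x\<in>C. \<forall>y\<in>carrier L. \<forall>z\<in>C. x \<sqsubseteq>\<^bsub>L\<^esub> y \<and> y \<sqsubseteq>\<^bsub>L\<^esub> z \<longrightarrow> y \<in> C)"

definition interval_in :: "'a gorder \<Rightarrow> 'a \<Rightarrow> 'a \<Rightarrow> 'a set" where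
  "interval_in L a b = {x \<in> carrier L. a \<sqsubseteq>\<^bsub>L\<^esub> x \<and> x \<sqsubseteq>\<^bsub>L\<^esub> b}"

definition is_interval :: "'a gorder \<Rightarrow> 'a set \<Rightarrow> bool" where
  "is_interval L C \<longleftrightarrow> (\<exists>a\<in>carrier L. \<exists>b\<in>carrier L. a \<sqsubseteq>\<^bsub>L\<^esub> b \<and> C = interval_in L a b)"

definition lower_pseudo_interval :: "'a gorder \<Rightarrow> 'a set \<Rightarrow> bool" where
  "lower_pseudo_interval L C \<longleftrightarrow> convex_in L C \<and>
     (\<exists>a\<in>carrier L. \<exists>B. B \<noteq> {} \<and> B \<subseteq> {b \<in> carrier L. a \<sqsubseteq>\<^bsub>L\<^esub> b} \<and>
        C = (\<Union>b\<in>B. interval_in L a b))"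

definition upper_pseudo_interval :: "'a gorder \<Rightarrow> 'a set \<Rightarrow> bool" where
  "upper_pseudo_interval L C \<longleftrightarrow> convex_in L C \<and>
     (\<exists>b\<in>carrier L. \<exists>A. A \<noteq> {} \<and> A \<subseteq> {a \<in> carrier L. a \<sqsubseteq>\<^bsub>L\<^esub> b} \<and>
        C = (\<Union>a\<in>A. interval_in L a b))"

definition down_closure :: "'a gorder \<Rightarrow> 'a set \<Rightarrow> 'a set" where
  "down_closure L C = {y \<in> carrier L. \<exists>x\<in>C. y \<sqsubseteq>\<^bsub>L\<^esub> x}"

text \<open>L[C] as a subposet of L \<times> {0 < 1}, with 0 = False, 1 = True.\<close>
definition doubling :: "'a gorder \<Rightarrow> 'a set \<Rightarrow> ('a \<times> bool) gorder" where
  "doubling L C =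
     \<lparr> carrier = (down_closure L C \<times> {False}) \<union>
                 (((carrier L - down_closure L C) \<union> C) \<times> {True}),
       eq = (=),
       le = (\<lambda>(x, s) (y, t). x \<sqsubseteq>\<^bsub>L\<^esub> y \<and> (s \<longrightarrow> t)) \<rparr>"

definition order_iso :: "('a, 'c) gorder_scheme \<Rightarrow> ('b, 'd) gorder_scheme \<Rightarrow> ('a \<Rightarrow> 'b) \<Rightarrow> bool" where
  "order_iso D M f \<longleftrightarrow> bij_betw f (carrier D) (carrier M) \<and>
     (\<forall>x\<in>carrier D. \<forall>y\<in>carrier D. x \<sqsubseteq>\<^bsub>D\<^esub> y \<longleftrightarrow> f x \<sqsubseteq>\<^bsub>M\<^esub> f y)"

inductive obtained_by_doublings :: "('a gorder \<Rightarrow> 'a set \<Rightarrow> bool) \<Rightarrow> 'a gorder \<Rightarrow> bool"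
  for P where
  one: "partial_order M \<Longrightarrow> card (carrier M) = 1 \<Longrightarrow> obtained_by_doublings P M"
| double: "obtained_by_doublings P L \<Longrightarrow> P L C \<Longrightarrow> partial_order M \<Longrightarrow>
           order_iso (doubling L C) M f \<Longrightarrow> obtained_by_doublings P M"

definition join_congruence_uniform :: "'a gorder \<Rightarrow> bool" where
  "join_congruence_uniform L \<longleftrightarrow> obtained_by_doublings lower_pseudo_interval L"

definition meet_congruence_uniform :: "'a gorder \<Rightarrow> bool" where
  "meet_congruence_uniform L \<longleftrightarrow> obtained_by_doublings upper_pseudo_interval L"

definition congruence_uniform :: "'a gorder \<Rightarrow> bool" where
  "congruence_uniform L \<longleftrightarrow> obtained_by_doublings is_interval L"

definition is_chain :: "'a gorder \<Rightarrow> 'a set \<Rightarrow> bool" where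
  "is_chain L C \<longleftrightarrow> C \<subseteq> carrier L \<and>
     (\<forall>x\<in>C. \<forall>y\<in>C. x \<sqsubseteq>\<^bsub>L\<^esub> y \<or> y \<sqsubseteq>\<^bsub>L\<^esub> x)"

definition maximal_chain :: "'a gorder \<Rightarrow> 'a set \<Rightarrow> bool" where
  "maximal_chain L C \<longleftrightarrow> is_chain L C \<and> (\<forall>D. is_chain L D \<and> C \<subseteq> D \<longrightarrow> D = C)"

definition lattice_length :: "'a gorder \<Rightarrow> nat" where
  "lattice_length L = Max {card C | C. is_chain L C} - 1"

definition join_irreducible :: "'a gorder \<Rightarrow> 'a \<Rightarrow> bool" where
  "join_irreducible L j \<longleftrightarrow> j \<in> carrier L \<and> \<not> (\<forall>x\<in>carrier L. j \<sqsubseteq>\<^bsub>L\<^esub> x) \<and>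
     (\<forall>a\<in>carrier L. \<forall>b\<in>carrier L. j = a \<squnion>\<^bsub>L\<^esub> b \<longrightarrow> j = a \<or> j = b)"

definition meet_irreducible :: "'a gorder \<Rightarrow> 'a \<Rightarrow> bool" where
  "meet_irreducible L m \<longleftrightarrow> m \<in> carrier L \<and> \<not> (\<forall>x\<in>carrier L. x \<sqsubseteq>\<^bsub>L\<^esub> m) \<and>
     (\<forall>a\<in>carrier L. \<forall>b\<in>carrier L. m = a \<sqinter>\<^bsub>L\<^esub> b \<longrightarrow> m = a \<or> m = b)"

definition join_extremal :: "'a gorder \<Rightarrow> bool" where
  "join_extremal L \<longleftrightarrow> lattice_length L = card {j. join_irreducible L j}"

definition meet_extremal :: "'a gorder \<Rightarrow> bool" where
  "meet_extremal L \<longleftrightarrow> lattice_length L = card {m. meet_irreducible L m}"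

definition extremal :: "'a gorder \<Rightarrow> bool" where
  "extremal L \<longleftrightarrow> join_extremal L \<and> meet_extremal L"

definition left_modular_elem :: "'a gorder \<Rightarrow> 'a \<Rightarrow> bool" where
  "left_modular_elem L a \<longleftrightarrow> a \<in> carrier L \<and>
     (\<forall>b\<in>carrier L. \<forall>c\<in>carrier L. b \<sqsubset>\<^bsub>L\<^esub> c \<longrightarrow>
        (b \<squnion>\<^bsub>L\<^esub> a) \<sqinter>\<^bsub>L\<^esub> c = b \<squnion>\<^bsub>L\<^esub> (a \<sqinter>\<^bsub>L\<^esub> c))"

definition left_modular :: "'a gorder \<Rightarrow> bool" where
  "left_modular L \<longleftrightarrow> (\<exists>C. maximal_chain L C \<and> (\<forall>a\<in>C. left_modular_elem L a))"

end

theory Submission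
  imports Defs
begin

(* Doubling a convex set with a least element preserves join-semidistributivity, which is
   invariant under order isomorphism; so join-congruence uniform lattices are
   join-semidistributive, and dually.

   In a finite lattice, call j a label of p < c if j is minimal among the elements below c
   and not below p; labels are join-irreducible. Labelling the steps of a maximal chain injects
   them into the join-irreducibles, so the length is at most their number. If a maximal chain C
   consists of left modular elements, every join-irreducible j labels the step of C ending at
   the least element of C above j, and join-semidistributivity makes the label of a cover
   unique; hence there are at most |C| - 1 join-irreducibles. Conversely, if L is join-extremal,
   the labelling of a longest chain D is onto. If (b \<squnion> x) \<sqinter> y > b \<squnion> (x \<sqinter> y) for some x in D,
   a label j of this gap also labels a step p < c of D with x \<le> p; then j lies below the join of
   two elements with the same meet with j but not below the first, which meet-semidistributivity
   forbids. The meet versions follow by duality. *)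

definition join_semidistributive :: "('a, 'b) gorder_scheme \<Rightarrow> bool" where
  "join_semidistributive L \<longleftrightarrow> (\<forall>x\<in>carrier L. \<forall>y\<in>carrier L. \<forall>z\<in>carrier L.
     x \<squnion>\<^bsub>L\<^esub> y = x \<squnion>\<^bsub>L\<^esub> z \<longrightarrow> x \<squnion>\<^bsub>L\<^esub> (y \<sqinter>\<^bsub>L\<^esub> z) = x \<squnion>\<^bsub>L\<^esub> y)"

definition meet_semidistributive :: "('a, 'b) gorder_scheme \<Rightarrow> bool" where
  "meet_semidistributive L \<longleftrightarrow> (\<forall>x\<in>carrier L. \<forall>y\<in>carrier L. \<forall>z\<in>carrier L.
     x \<sqinter>\<^bsub>L\<^esub> y = x \<sqinter>\<^bsub>L\<^esub> z \<longrightarrow> x \<sqinter>\<^bsub>L\<^esub> (y \<squnion>\<^bsub>L\<^esub> z) = x \<sqinter>\<^bsub>L\<^esub> y)"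

lemma join_semidistributive_dual [simp]:
  "join_semidistributive (inv_gorder L) \<longleftrightarrow> meet_semidistributive L"
  by (simp add: join_semidistributive_def meet_semidistributive_def)

lemma join_semidistributiveD:
  "\<lbrakk>join_semidistributive L; x \<in> carrier L; y \<in> carrier L; z \<in> carrier L;
    x \<squnion>\<^bsub>L\<^esub> y = x \<squnion>\<^bsub>L\<^esub> z\<rbrakk> \<Longrightarrow> x \<squnion>\<^bsub>L\<^esub> (y \<sqinter>\<^bsub>L\<^esub> z) = x \<squnion>\<^bsub>L\<^esub> y"
  unfolding join_semidistributive_def by blast

lemma meet_semidistributiveD:
  "\<lbrakk>meet_semidistributive L; x \<in> carrier L; y \<in> carrier L; z \<in> carrier L;
    x \<sqinter>\<^bsub>L\<^esub> y = x \<sqinter>\<^bsub>L\<^esub> z\<rbrakk> \<Longrightarrow> x \<sqinter>\<^bsub>L\<^esub> (y \<squnion>\<^bsub>L\<^esub> z) = x \<sqinter>\<^bsub>L\<^esub> y"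
  unfolding meet_semidistributive_def by blast

lemma order_iso_dual [simp]: "order_iso (inv_gorder D) (inv_gorder M) f \<longleftrightarrow> order_iso D M f"
  by (auto simp: order_iso_def)

lemma order_iso_surj:
  "\<lbrakk>order_iso D M f; y \<in> carrier M\<rbrakk> \<Longrightarrow> \<exists>x\<in>carrier D. y = f x"
  unfolding order_iso_def bij_betw_def by auto

lemma order_iso_least_Upper:
  assumes iso: "order_iso D M f" and x: "x \<in> carrier D" and y: "y \<in> carrier D"
    and lub: "least D s (Upper D {x, y})"
  shows "least M (f s) (Upper M {f x, f y})"
proof -
  have f: "\<And>u v. u \<in> carrier D \<Longrightarrow> v \<in> carrier D \<Longrightarrow> f u \<sqsubseteq>\<^bsub>M\<^esub> f v \<longleftrightarrow> u \<sqsubseteq>\<^bsub>D\<^esub> v"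
    and fc: "\<And>u. u \<in> carrier D \<Longrightarrow> f u \<in> carrier M"
    using iso unfolding order_iso_def bij_betw_def by auto
  have s: "s \<in> carrier D" "x \<sqsubseteq>\<^bsub>D\<^esub> s" "y \<sqsubseteq>\<^bsub>D\<^esub> s"
    and below: "\<And>w. w \<in> carrier D \<Longrightarrow> x \<sqsubseteq>\<^bsub>D\<^esub> w \<Longrightarrow> y \<sqsubseteq>\<^bsub>D\<^esub> w \<Longrightarrow> s \<sqsubseteq>\<^bsub>D\<^esub> w"
    using lub x y unfolding least_def Upper_def by auto
  show ?thesis
  proof (rule least_UpperI)
    fix w assume "w \<in> Upper M {f x, f y}"
    moreover obtain w' where "w' \<in> carrier D" "w = f w'"
      using order_iso_surj[OF iso] \<open>w \<in> Upper M {f x, f y}\<close> by (meson Upper_closed subsetD)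
    ultimately show "f s \<sqsubseteq>\<^bsub>M\<^esub> w" using below f fc s x y by (auto simp: Upper_def)
  qed (use f fc s x y in auto)
qed

lemma order_iso_lattice:
  assumes D: "lattice D" and M: "partial_order M" and iso: "order_iso D M f"
  shows "lattice M"
    and "\<And>x y. \<lbrakk>x \<in> carrier D; y \<in> carrier D\<rbrakk> \<Longrightarrow> f (x \<squnion>\<^bsub>D\<^esub> y) = f x \<squnion>\<^bsub>M\<^esub> f y"
    and "\<And>x y. \<lbrakk>x \<in> carrier D; y \<in> carrier D\<rbrakk> \<Longrightarrow> f (x \<sqinter>\<^bsub>D\<^esub> y) = f x \<sqinter>\<^bsub>M\<^esub> f y"
proof -
  interpret D: lattice D by (rule D)
  interpret M: partial_order M by (rule M)
  have iso': "order_iso (inv_gorder D) (inv_gorder M) f" using iso by simp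
  note lub = order_iso_least_Upper[OF iso] and glb = order_iso_least_Upper[OF iso', simplified]
  show "lattice M"
  proof (unfold_locales)
    fix u v assume "u \<in> carrier M" "v \<in> carrier M"
    then obtain x y where xy: "x \<in> carrier D" "y \<in> carrier D" "u = f x" "v = f y"
      using order_iso_surj[OF iso] by metis
    show "\<exists>s. least M s (Upper M {u, v})"
      using lub[OF xy(1,2) D.sup_of_two_least[OF xy(1,2)]] xy by blast
    show "\<exists>s. greatest M s (Lower M {u, v})"
      using glb[OF xy(1,2) D.inf_of_two_greatest[OF xy(1,2)]] xy by blast
  qed
  then interpret M: lattice M .
  fix x y assume xy: "x \<in> carrier D" "y \<in> carrier D"
  show "f (x \<squnion>\<^bsub>D\<^esub> y) = f x \<squnion>\<^bsub>M\<^esub> f y"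
    using M.least_unique[OF lub[OF xy D.sup_of_two_least[OF xy]]] M.sup_of_two_least
    by (metis join_def order_iso_def iso bij_betw_apply xy)
  show "f (x \<sqinter>\<^bsub>D\<^esub> y) = f x \<sqinter>\<^bsub>M\<^esub> f y"
    using M.greatest_unique[OF glb[OF xy D.inf_of_two_greatest[OF xy]]] M.inf_of_two_greatest
    by (metis meet_def order_iso_def iso bij_betw_apply xy)
qed

lemma order_iso_join_semidistributive:
  assumes D: "lattice D" and M: "partial_order M" and iso: "order_iso D M f"
    and jsd: "join_semidistributive D"
  shows "join_semidistributive M"
  unfolding join_semidistributive_def
proof (intro ballI impI)
  fix u v w assume "u \<in> carrier M" "v \<in> carrier M" "w \<in> carrier M"
    and eq: "u \<squnion>\<^bsub>M\<^esub> v = u \<squnion>\<^bsub>M\<^esub> w"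
  then obtain x y z where xyz: "x \<in> carrier D" "y \<in> carrier D" "z \<in> carrier D"
    and uvw: "u = f x" "v = f y" "w = f z"
    using order_iso_surj[OF iso] by metis
  interpret D: lattice D by (rule D)
  note join = order_iso_lattice(2)[OF D M iso] and meet = order_iso_lattice(3)[OF D M iso]
  have inj: "inj_on f (carrier D)" using iso unfolding order_iso_def bij_betw_def by simp
  have "x \<squnion>\<^bsub>D\<^esub> y = x \<squnion>\<^bsub>D\<^esub> z"
    using inj_onD[OF inj] eq uvw xyz join by simp
  then have "x \<squnion>\<^bsub>D\<^esub> (y \<sqinter>\<^bsub>D\<^esub> z) = x \<squnion>\<^bsub>D\<^esub> y"
    using join_semidistributiveD[OF jsd xyz] by simp
  then show "u \<squnion>\<^bsub>M\<^esub> (v \<sqinter>\<^bsub>M\<^esub> w) = u \<squnion>\<^bsub>M\<^esub> v"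
    using uvw xyz join meet by (metis D.meet_closed)
qed

lemma order_iso_meet_semidistributive:
  assumes "lattice D" "partial_order M" "order_iso D M f" "meet_semidistributive D"
  shows "meet_semidistributive M"
  using order_iso_join_semidistributive[of "inv_gorder D" "inv_gorder M" f] assms
  by (simp add: lattice.dual_lattice partial_order.dual_order)

subsection \<open>Doubling a convex set\<close>

locale lattice_convex_set = lattice L for L :: "'a gorder" (structure) +
  fixes C :: "'a set"
  assumes convex: "convex_in L C"
begin

abbreviation down :: "'a set" where "down \<equiv> down_closure L C"

lemma convex_subset: "C \<subseteq> carrier L"
  using convex unfolding convex_in_def by simp

lemma convexD: "\<lbrakk>c \<in> C; c' \<in> C; y \<in> carrier L; c \<sqsubseteq> y; y \<sqsubseteq> c'\<rbrakk> \<Longrightarrow> y \<in> C"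
  using convex unfolding convex_in_def by blast

lemma down_closure_downward: "\<lbrakk>y \<in> down; x \<in> carrier L; x \<sqsubseteq> y\<rbrakk> \<Longrightarrow> x \<in> down"
  unfolding down_closure_def using convex_subset by (blast intro: le_trans)

lemma mem_doubling_iff [simp]:
  "(x, b) \<in> carrier (doubling L C) \<longleftrightarrow>
     x \<in> carrier L \<and> (if b then x \<notin> down \<or> x \<in> C else x \<in> down)"
  using convex_subset unfolding doubling_def down_closure_def by auto

lemma le_doubling_iff [simp]: "(x, a) \<sqsubseteq>\<^bsub>doubling L C\<^esub> (y, b) \<longleftrightarrow> x \<sqsubseteq> y \<and> (a \<longrightarrow> b)"
  unfolding doubling_def by simp

lemma partial_order_doubling: "partial_order (doubling L C)"
proof -
  have car: "fst u \<in> carrier L" if "u \<in> carrier (doubling L C)" for u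
    using that by (cases u) simp
  have le: "u \<sqsubseteq>\<^bsub>doubling L C\<^esub> v \<longleftrightarrow> fst u \<sqsubseteq> fst v \<and> (snd u \<longrightarrow> snd v)" for u v
    by (cases u, cases v) simp
  have eq: "(.=\<^bsub>doubling L C\<^esub>) = (=)" by (simp add: doubling_def)
  show ?thesis
    by unfold_locales (auto simp: le eq prod_eq_iff dest!: car intro: le_trans)
qed

lemma doubling_lub:
  assumes u: "(x, a) \<in> carrier (doubling L C)" and v: "(y, b) \<in> carrier (doubling L C)"
  shows "least (doubling L C) (x \<squnion> y, a \<or> b \<or> x \<squnion> y \<notin> down)
           (Upper (doubling L C) {(x, a), (y, b)})"
proof -
  have x: "x \<in> carrier L" and y: "y \<in> carrier L" using u v by simp_all
  note xy = join_closed[OF x y] join_left[OF x y] join_right[OF x y]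
  show ?thesis
  proof (rule least_UpperI)
    show "(x \<squnion> y, a \<or> b \<or> x \<squnion> y \<notin> down) \<in> carrier (doubling L C)"
    proof (cases "(a \<or> b) \<and> x \<squnion> y \<in> down")
      case True
      then obtain c where c: "c \<in> C" "x \<squnion> y \<sqsubseteq> c" unfolding down_closure_def by blast
      have "x \<in> down" "y \<in> down"
        using True down_closure_downward x y xy by blast+
      then have "x \<in> C \<or> y \<in> C" using True u v by auto
      then have "x \<squnion> y \<in> C" using convexD c xy by blast
      then show ?thesis using xy by simp
    qed (use xy in auto)
  next
    fix w assume upper: "w \<in> Upper (doubling L C) {(x, a), (y, b)}"
    obtain z r where w: "w = (z, r)" by (cases w)
    have z: "z \<in> carrier L" "if r then z \<notin> down \<or> z \<in> C else z \<in> down"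
      and le: "x \<sqsubseteq> z" "y \<sqsubseteq> z" "a \<longrightarrow> r" "b \<longrightarrow> r"
      using Upper_memD[OF upper, of "(x, a)"] Upper_memD[OF upper, of "(y, b)"] u v
      unfolding w by auto
    have "x \<squnion> y \<sqsubseteq> z" using le x y z by (simp add: join_le)
    moreover have "r" if "x \<squnion> y \<notin> down"
      using that z \<open>x \<squnion> y \<sqsubseteq> z\<close> down_closure_downward xy by (cases r) auto
    ultimately show "(x \<squnion> y, a \<or> b \<or> x \<squnion> y \<notin> down) \<sqsubseteq>\<^bsub>doubling L C\<^esub> w"
      using le w by auto
  qed (use u v in \<open>auto simp: join_left join_right\<close>)
qed

lemma doubling_glb:
  assumes u: "(x, a) \<in> carrier (doubling L C)" and v: "(y, b) \<in> carrier (doubling L C)"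
  shows "greatest (doubling L C) (x \<sqinter> y, a \<and> b \<and> (x \<sqinter> y \<notin> down \<or> x \<sqinter> y \<in> C))
           (Lower (doubling L C) {(x, a), (y, b)})"
proof -
  have x: "x \<in> carrier L" and y: "y \<in> carrier L" using u v by simp_all
  note xy = meet_closed[OF x y] meet_left[OF x y] meet_right[OF x y]
  show ?thesis
  proof (rule greatest_LowerI)
    show "(x \<sqinter> y, a \<and> b \<and> (x \<sqinter> y \<notin> down \<or> x \<sqinter> y \<in> C)) \<in> carrier (doubling L C)"
    proof (cases "a \<and> b")
      case False
      then have "x \<in> down \<or> y \<in> down" using u v by auto
      then have "x \<sqinter> y \<in> down" using down_closure_downward[OF _ xy(1)] xy(2,3) by blast
      then show ?thesis using xy by auto
    qed (use xy in auto)
  next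
    fix w assume lower: "w \<in> Lower (doubling L C) {(x, a), (y, b)}"
    obtain z r where w: "w = (z, r)" by (cases w)
    have z: "z \<in> carrier L" "if r then z \<notin> down \<or> z \<in> C else z \<in> down"
      and le: "z \<sqsubseteq> x" "z \<sqsubseteq> y" "r \<longrightarrow> a" "r \<longrightarrow> b"
      using Lower_memD[OF lower, of "(x, a)"] Lower_memD[OF lower, of "(y, b)"] u v
      unfolding w by auto
    have zxy: "z \<sqsubseteq> x \<sqinter> y" using le x y z by (simp add: meet_le)
    moreover have "x \<sqinter> y \<in> C" if r "x \<sqinter> y \<in> down"
    proof -
      obtain c where c: "c \<in> C" "x \<sqinter> y \<sqsubseteq> c"
        using \<open>x \<sqinter> y \<in> down\<close> unfolding down_closure_def by blast
      have "z \<in> C" using z \<open>r\<close> down_closure_downward[OF \<open>x \<sqinter> y \<in> down\<close> z(1) zxy] by simp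
      then show "x \<sqinter> y \<in> C" by (rule convexD[OF _ c(1) xy(1) zxy c(2)])
    qed
    ultimately show "w \<sqsubseteq>\<^bsub>doubling L C\<^esub> (x \<sqinter> y, a \<and> b \<and> (x \<sqinter> y \<notin> down \<or> x \<sqinter> y \<in> C))"
      using le w by auto
  qed (use u v in \<open>auto simp: meet_left meet_right\<close>)
qed

lemma lattice_doubling: "lattice (doubling L C)"
proof -
  interpret D: partial_order "doubling L C" by (rule partial_order_doubling)
  show ?thesis
  proof
    fix u v assume "u \<in> carrier (doubling L C)" "v \<in> carrier (doubling L C)"
    then show "\<exists>s. least (doubling L C) s (Upper (doubling L C) {u, v})"
      and "\<exists>s. greatest (doubling L C) s (Lower (doubling L C) {u, v})"
      using doubling_lub doubling_glb by (metis surj_pair)+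
  qed
qed

lemma join_doubling:
  assumes "(x, a) \<in> carrier (doubling L C)" "(y, b) \<in> carrier (doubling L C)"
  shows "(x, a) \<squnion>\<^bsub>doubling L C\<^esub> (y, b) = (x \<squnion> y, a \<or> b \<or> x \<squnion> y \<notin> down)"
proof -
  interpret D: lattice "doubling L C" by (rule lattice_doubling)
  show ?thesis
    by (rule D.joinI[OF _ assms]) (rule D.least_unique[OF _ doubling_lub[OF assms]])
qed

lemma meet_doubling:
  assumes "(x, a) \<in> carrier (doubling L C)" "(y, b) \<in> carrier (doubling L C)"
  shows "(x, a) \<sqinter>\<^bsub>doubling L C\<^esub> (y, b) = (x \<sqinter> y, a \<and> b \<and> (x \<sqinter> y \<notin> down \<or> x \<sqinter> y \<in> C))"
proof -
  interpret D: lattice "doubling L C" by (rule lattice_doubling)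
  show ?thesis
    by (rule D.meetI[OF _ assms]) (rule D.greatest_unique[OF _ doubling_glb[OF assms]])
qed

lemma join_semidistributive_doubling:
  assumes jsd: "join_semidistributive L"
    and bot: "c\<^sub>0 \<in> C" "\<And>c. c \<in> C \<Longrightarrow> c\<^sub>0 \<sqsubseteq> c"
  shows "join_semidistributive (doubling L C)"
  unfolding join_semidistributive_def Ball_def split_paired_All
proof (intro allI impI)
  interpret D: lattice "doubling L C" by (rule lattice_doubling)
  fix x a y b z c
  assume u: "(x, a) \<in> carrier (doubling L C)" and v: "(y, b) \<in> carrier (doubling L C)"
    and w: "(z, c) \<in> carrier (doubling L C)"
    and eq: "(x, a) \<squnion>\<^bsub>doubling L C\<^esub> (y, b) = (x, a) \<squnion>\<^bsub>doubling L C\<^esub> (z, c)"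
  have x: "x \<in> carrier L" and y: "y \<in> carrier L" and z: "z \<in> carrier L" using u v w by simp_all
  have xy: "x \<squnion> y = x \<squnion> z"
    and bits: "(a \<or> b \<or> x \<squnion> y \<notin> down) = (a \<or> c \<or> x \<squnion> z \<notin> down)"
    using eq unfolding join_doubling[OF u v] join_doubling[OF u w] prod.inject by blast+
  have yz: "(y, b) \<sqinter>\<^bsub>doubling L C\<^esub> (z, c) = (y \<sqinter> z, b \<and> c \<and> (y \<sqinter> z \<notin> down \<or> y \<sqinter> z \<in> C))"
    by (rule meet_doubling[OF v w])
  have yz_carrier: "(y \<sqinter> z, b \<and> c \<and> (y \<sqinter> z \<notin> down \<or> y \<sqinter> z \<in> C)) \<in> carrier (doubling L C)"
    using D.meet_closed[OF v w] unfolding yz .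
  have "(a \<or> (b \<and> c \<and> (y \<sqinter> z \<notin> down \<or> y \<sqinter> z \<in> C)) \<or> x \<squnion> y \<notin> down)
      = (a \<or> b \<or> x \<squnion> y \<notin> down)"
  \<comment> \<open>The second coordinates can only differ if \<open>y, z \<in> C\<close>;
    then \<open>y \<sqinter> z \<in> C\<close> since \<open>C\<close> has a least element.\<close>
  proof (cases "\<not> a \<and> b \<and> x \<squnion> y \<in> down")
    case True
    then have "\<not> a" "b" and xy_down: "x \<squnion> y \<in> down" by auto
    then have "c" using bits xy by auto
    have "y \<in> down" by (rule down_closure_downward[OF xy_down y join_right[OF x y]])
    moreover have "z \<in> down"
      by (rule down_closure_downward[OF xy_down[unfolded xy] z join_right[OF x z]])
    ultimately have yC: "y \<in> C" and zC: "z \<in> C" using v w \<open>b\<close> \<open>c\<close> by auto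
    have "c\<^sub>0 \<sqsubseteq> y \<sqinter> z"
      using meet_le[OF bot(2)[OF yC] bot(2)[OF zC] y z] bot(1) convex_subset by blast
    then have "y \<sqinter> z \<in> C" by (rule convexD[OF bot(1) yC meet_closed[OF y z] _ meet_left[OF y z]])
    then show ?thesis using \<open>b\<close> \<open>c\<close> by blast
  qed (use bits xy in auto)
  then show "(x, a) \<squnion>\<^bsub>doubling L C\<^esub> ((y, b) \<sqinter>\<^bsub>doubling L C\<^esub> (z, c)) = (x, a) \<squnion>\<^bsub>doubling L C\<^esub> (y, b)"
    using join_semidistributiveD[OF jsd x y z xy]
    unfolding yz join_doubling[OF u yz_carrier] join_doubling[OF u v] by simp
qed

lemma meet_semidistributive_doubling:
  assumes msd: "meet_semidistributive L"
    and top: "c\<^sub>1 \<in> C" "\<And>c. c \<in> C \<Longrightarrow> c \<sqsubseteq> c\<^sub>1"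
  shows "meet_semidistributive (doubling L C)"
  unfolding meet_semidistributive_def Ball_def split_paired_All
proof (intro allI impI)
  interpret D: lattice "doubling L C" by (rule lattice_doubling)
  fix x a y b z c
  assume u: "(x, a) \<in> carrier (doubling L C)" and v: "(y, b) \<in> carrier (doubling L C)"
    and w: "(z, c) \<in> carrier (doubling L C)"
    and eq: "(x, a) \<sqinter>\<^bsub>doubling L C\<^esub> (y, b) = (x, a) \<sqinter>\<^bsub>doubling L C\<^esub> (z, c)"
  have x: "x \<in> carrier L" and y: "y \<in> carrier L" and z: "z \<in> carrier L" using u v w by simp_all
  have xy: "x \<sqinter> y = x \<sqinter> z"
    and bits: "(a \<and> b \<and> (x \<sqinter> y \<notin> down \<or> x \<sqinter> y \<in> C)) = (a \<and> c \<and> (x \<sqinter> z \<notin> down \<or> x \<sqinter> z \<in> C))"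
    using eq unfolding meet_doubling[OF u v] meet_doubling[OF u w] prod.inject by blast+
  have yz: "(y, b) \<squnion>\<^bsub>doubling L C\<^esub> (z, c) = (y \<squnion> z, b \<or> c \<or> y \<squnion> z \<notin> down)"
    by (rule join_doubling[OF v w])
  have yz_carrier: "(y \<squnion> z, b \<or> c \<or> y \<squnion> z \<notin> down) \<in> carrier (doubling L C)"
    using D.join_closed[OF v w] unfolding yz .
  have "(a \<and> (b \<or> c \<or> y \<squnion> z \<notin> down) \<and> (x \<sqinter> y \<notin> down \<or> x \<sqinter> y \<in> C))
      = (a \<and> b \<and> (x \<sqinter> y \<notin> down \<or> x \<sqinter> y \<in> C))"
  \<comment> \<open>The second coordinates can only differ if \<open>y, z \<in> down\<close>;
    then \<open>y \<squnion> z \<in> down\<close> since \<open>C\<close> has a greatest element.\<close>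
  proof (cases "a \<and> \<not> b \<and> (x \<sqinter> y \<notin> down \<or> x \<sqinter> y \<in> C)")
    case True
    then have "\<not> c" using bits xy by auto
    have below_top: "e \<sqsubseteq> c\<^sub>1" if e: "e \<in> down" for e
    proof -
      obtain c' where "c' \<in> C" "e \<sqsubseteq> c'" "e \<in> carrier L"
        using e unfolding down_closure_def by blast
      then show ?thesis using top convex_subset by (meson le_trans subsetD)
    qed
    have "y \<in> down" "z \<in> down" using v w True \<open>\<not> c\<close> by auto
    then have "y \<squnion> z \<sqsubseteq> c\<^sub>1" using below_top top(1) convex_subset y z by (simp add: join_le subsetD)
    then have "y \<squnion> z \<in> down" using top(1) y z unfolding down_closure_def by auto
    then show ?thesis using True \<open>\<not> c\<close> by auto
  qed (use bits xy in auto)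
  then show "(x, a) \<sqinter>\<^bsub>doubling L C\<^esub> ((y, b) \<squnion>\<^bsub>doubling L C\<^esub> (z, c)) = (x, a) \<sqinter>\<^bsub>doubling L C\<^esub> (y, b)"
    using meet_semidistributiveD[OF msd x y z xy]
    unfolding yz meet_doubling[OF u yz_carrier] meet_doubling[OF u v] by simp
qed

end

subsection \<open>Congruence uniform lattices are semidistributive\<close>

lemma lattice_card_one:
  assumes "partial_order M" and "card (carrier M) = 1"
  shows "lattice M"
proof -
  interpret partial_order M by fact
  obtain e where e: "carrier M = {e}" using assms(2) card_1_singletonE by blast
  then have "least M e (Upper M {e})" "greatest M e (Lower M {e})"
    by (auto simp: least_def greatest_def Upper_def Lower_def)
  with e show ?thesis by unfold_locales auto
qed

lemma join_semidistributive_card_one: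
  assumes "lattice M" and "card (carrier M) = 1"
  shows "join_semidistributive M"
proof -
  interpret lattice M by fact
  obtain e where "carrier M = {e}" using assms(2) card_1_singletonE by blast
  then show ?thesis
    unfolding join_semidistributive_def by (metis meet_closed singletonD)
qed

lemma meet_semidistributive_card_one:
  "\<lbrakk>lattice M; card (carrier M) = 1\<rbrakk> \<Longrightarrow> meet_semidistributive M"
  using join_semidistributive_card_one[of "inv_gorder M"] by (simp add: lattice.dual_lattice)

lemma obtained_by_doublings_lattice:
  assumes "obtained_by_doublings P M" and "\<And>L C. lattice L \<Longrightarrow> P L C \<Longrightarrow> convex_in L C"
  shows "lattice M"
  using assms(1)
proof induction
  case (one M)
  then show ?case by (rule lattice_card_one)
next
  case (double L C M f)
  then interpret lattice_convex_set L C
    by (simp add: lattice_convex_set_def lattice_convex_set_axioms_def assms(2))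
  show ?case by (rule order_iso_lattice(1)[OF lattice_doubling double.hyps(3,4)])
qed

lemma obtained_by_doublings_join_semidistributive:
  assumes "obtained_by_doublings P M"
    and P: "\<And>L C. lattice L \<Longrightarrow> P L C \<Longrightarrow> convex_in L C \<and> (\<exists>c\<^sub>0\<in>C. \<forall>c\<in>C. c\<^sub>0 \<sqsubseteq>\<^bsub>L\<^esub> c)"
  shows "join_semidistributive M"
  using assms(1)
proof induction
  case (one M)
  then show ?case using lattice_card_one join_semidistributive_card_one by blast
next
  case (double L C M f)
  have "lattice L" using obtained_by_doublings_lattice[OF double.hyps(1)] P by blast
  then interpret lattice_convex_set L C
    using P double.hyps(2) by (simp add: lattice_convex_set_def lattice_convex_set_axioms_def)
  obtain c\<^sub>0 where "c\<^sub>0 \<in> C" "\<forall>c\<in>C. c\<^sub>0 \<sqsubseteq>\<^bsub>L\<^esub> c" using P \<open>lattice L\<close> double.hyps(2) by blast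
  then have "join_semidistributive (doubling L C)"
    using join_semidistributive_doubling double.IH by blast
  then show ?case
    by (rule order_iso_join_semidistributive[OF lattice_doubling double.hyps(3,4)])
qed

lemma obtained_by_doublings_meet_semidistributive:
  assumes "obtained_by_doublings P M"
    and P: "\<And>L C. lattice L \<Longrightarrow> P L C \<Longrightarrow> convex_in L C \<and> (\<exists>c\<^sub>1\<in>C. \<forall>c\<in>C. c \<sqsubseteq>\<^bsub>L\<^esub> c\<^sub>1)"
  shows "meet_semidistributive M"
  using assms(1)
proof induction
  case (one M)
  then show ?case using lattice_card_one meet_semidistributive_card_one by blast
next
  case (double L C M f)
  have "lattice L" using obtained_by_doublings_lattice[OF double.hyps(1)] P by blast
  then interpret lattice_convex_set L C
    using P double.hyps(2) by (simp add: lattice_convex_set_def lattice_convex_set_axioms_def)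
  obtain c\<^sub>1 where "c\<^sub>1 \<in> C" "\<forall>c\<in>C. c \<sqsubseteq>\<^bsub>L\<^esub> c\<^sub>1" using P \<open>lattice L\<close> double.hyps(2) by blast
  then have "meet_semidistributive (doubling L C)"
    using meet_semidistributive_doubling double.IH by blast
  then show ?case
    by (rule order_iso_meet_semidistributive[OF lattice_doubling double.hyps(3,4)])
qed

lemma lower_pseudo_interval_convex_least:
  assumes "partial_order L" and "lower_pseudo_interval L C"
  shows "convex_in L C \<and> (\<exists>c\<^sub>0\<in>C. \<forall>c\<in>C. c\<^sub>0 \<sqsubseteq>\<^bsub>L\<^esub> c)"
proof -
  interpret partial_order L by fact
  obtain a B where "convex_in L C" "a \<in> carrier L" "B \<noteq> {}" "B \<subseteq> {b \<in> carrier L. a \<sqsubseteq>\<^bsub>L\<^esub> b}"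
    and C: "C = (\<Union>b\<in>B. interval_in L a b)"
    using assms(2) unfolding lower_pseudo_interval_def by blast
  moreover from this have "a \<in> C" unfolding interval_in_def by auto
  ultimately show ?thesis unfolding C interval_in_def by blast
qed

lemma upper_pseudo_interval_convex_greatest:
  assumes "partial_order L" and "upper_pseudo_interval L C"
  shows "convex_in L C \<and> (\<exists>c\<^sub>1\<in>C. \<forall>c\<in>C. c \<sqsubseteq>\<^bsub>L\<^esub> c\<^sub>1)"
proof -
  interpret partial_order L by fact
  obtain b A where "convex_in L C" "b \<in> carrier L" "A \<noteq> {}" "A \<subseteq> {a \<in> carrier L. a \<sqsubseteq>\<^bsub>L\<^esub> b}"
    and C: "C = (\<Union>a\<in>A. interval_in L a b)"
    using assms(2) unfolding upper_pseudo_interval_def by blast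
  moreover from this have "b \<in> C" unfolding interval_in_def by auto
  ultimately show ?thesis unfolding C interval_in_def by blast
qed

lemma interval_convex_least_greatest:
  assumes "partial_order L" and "is_interval L C"
  shows "convex_in L C \<and> (\<exists>c\<^sub>0\<in>C. \<forall>c\<in>C. c\<^sub>0 \<sqsubseteq>\<^bsub>L\<^esub> c) \<and> (\<exists>c\<^sub>1\<in>C. \<forall>c\<in>C. c \<sqsubseteq>\<^bsub>L\<^esub> c\<^sub>1)"
proof -
  interpret partial_order L by fact
  obtain a b where "a \<in> carrier L" "b \<in> carrier L" "a \<sqsubseteq>\<^bsub>L\<^esub> b" and C: "C = interval_in L a b"
    using assms(2) unfolding is_interval_def by blast
  then show ?thesis
    unfolding convex_in_def C interval_in_def by (blast intro: le_trans)
qed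

lemma join_congruence_uniform_join_semidistributive:
  "join_congruence_uniform L \<Longrightarrow> join_semidistributive L"
  unfolding join_congruence_uniform_def
  using obtained_by_doublings_join_semidistributive lower_pseudo_interval_convex_least
  by (metis lattice.axioms(1) upper_semilattice.axioms(1))

lemma meet_congruence_uniform_meet_semidistributive:
  "meet_congruence_uniform L \<Longrightarrow> meet_semidistributive L"
  unfolding meet_congruence_uniform_def
  using obtained_by_doublings_meet_semidistributive upper_pseudo_interval_convex_greatest
  by (metis lattice.axioms(1) upper_semilattice.axioms(1))

lemma congruence_uniform_semidistributive:
  "congruence_uniform L \<Longrightarrow> join_semidistributive L \<and> meet_semidistributive L"
  unfolding congruence_uniform_def
  using obtained_by_doublings_join_semidistributive obtained_by_doublings_meet_semidistributive
    interval_convex_least_greatest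
  by (metis lattice.axioms(1) upper_semilattice.axioms(1))

lemma (in partial_order) finite_has_minimal:
  assumes "finite S" "S \<subseteq> carrier L" "S \<noteq> {}"
  shows "\<exists>m\<in>S. \<forall>z\<in>S. z \<sqsubseteq> m \<longrightarrow> z = m"
proof -
  obtain x where "x \<in> S" using assms(3) by blast
  let ?R = "{(z, y). z \<in> S \<and> y \<in> S \<and> z \<sqsubset> y}"
  have "trans ?R"
    by (rule transI) (use assms(2) in \<open>auto intro: lless_trans\<close>)
  moreover have "irrefl ?R" by (auto simp: irrefl_def lless_eq)
  ultimately have "acyclic ?R" by (simp add: acyclic_irrefl)
  moreover have "finite ?R" by (rule finite_subset[of _ "S \<times> S"]) (use assms(1) in auto)
  ultimately have "wf ?R" by (rule finite_acyclic_wf[rotated])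
  then obtain m where m: "m \<in> S" and min: "\<And>z. (z, m) \<in> ?R \<Longrightarrow> z \<notin> S"
    by (rule wfE_min[OF _ \<open>x \<in> S\<close>]) blast
  have "z = m" if "z \<in> S" "z \<sqsubseteq> m" for z
  proof (rule ccontr)
    assume "z \<noteq> m"
    then have "(z, m) \<in> ?R" using that m by (simp add: lless_eq)
    then show False using min \<open>z \<in> S\<close> by blast
  qed
  then show ?thesis using m by blast
qed

(* Chains, irreducibles and extremality are defined on plain 'a gorder records, so this locale
   fixes that record type. *)
locale gorder_lattice = lattice L for L :: "'a gorder" (structure)

locale finite_lattice = gorder_lattice +
  assumes finite_carrier: "finite (carrier L)"
    and carrier_not_empty: "carrier L \<noteq> {}"

sublocale finite_lattice \<subseteq> bounded_lattice
proof
  have "greatest L (\<Sqinter>(carrier L)) (Lower L (carrier L))"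
    by (rule finite_inf_greatest[OF finite_carrier subset_refl carrier_not_empty])
  then show "\<exists>x. least L x (carrier L)"
    by (intro exI[of _ "\<Sqinter>(carrier L)"]) (simp add: least_def greatest_Lower_below)
  have "least L (\<Squnion>(carrier L)) (Upper L (carrier L))"
    by (rule finite_sup_least[OF finite_carrier subset_refl carrier_not_empty])
  then show "\<exists>x. greatest L x (carrier L)"
    by (intro exI[of _ "\<Squnion>(carrier L)"]) (simp add: greatest_def least_Upper_above)
qed

lemma is_chain_dual [simp]: "is_chain (inv_gorder L) D \<longleftrightarrow> is_chain L D"
  unfolding is_chain_def by auto

lemma maximal_chain_dual [simp]: "maximal_chain (inv_gorder L) D \<longleftrightarrow> maximal_chain L D"
  unfolding maximal_chain_def by simp

lemma lattice_length_dual [simp]: "lattice_length (inv_gorder L) = lattice_length L"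
  unfolding lattice_length_def by simp

definition consecutive_in :: "'a gorder \<Rightarrow> 'a set \<Rightarrow> 'a \<Rightarrow> 'a \<Rightarrow> bool" where
  "consecutive_in L D p c \<longleftrightarrow> p \<in> D \<and> c \<in> D \<and> p \<sqsubset>\<^bsub>L\<^esub> c \<and> (\<forall>e\<in>D. e \<sqsubset>\<^bsub>L\<^esub> c \<longrightarrow> e \<sqsubseteq>\<^bsub>L\<^esub> p)"

definition lower_cover :: "'a gorder \<Rightarrow> 'a \<Rightarrow> 'a \<Rightarrow> bool" where
  "lower_cover L p c \<longleftrightarrow> p \<in> carrier L \<and> c \<in> carrier L \<and> p \<sqsubset>\<^bsub>L\<^esub> c \<and>
     (\<forall>z\<in>carrier L. p \<sqsubseteq>\<^bsub>L\<^esub> z \<and> z \<sqsubseteq>\<^bsub>L\<^esub> c \<longrightarrow> z = p \<or> z = c)"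

context gorder_lattice
begin

lemma maximal_chain_mem:
  assumes "maximal_chain L C" "z \<in> carrier L" "\<And>d. d \<in> C \<Longrightarrow> d \<sqsubseteq> z \<or> z \<sqsubseteq> d"
  shows "z \<in> C"
proof -
  have "is_chain L (insert z C)" using assms unfolding maximal_chain_def is_chain_def by auto
  then show ?thesis using assms(1) unfolding maximal_chain_def by blast
qed

lemma maximal_chain_consecutive_lower_cover:
  assumes C: "maximal_chain L C" and pc: "consecutive_in L C p c"
  shows "lower_cover L p c"
proof -
  have chain: "is_chain L C" using C unfolding maximal_chain_def by simp
  then have carrier: "p \<in> carrier L" "c \<in> carrier L" and "p \<sqsubset> c"
    and below_p: "\<And>e. e \<in> C \<Longrightarrow> e \<sqsubset> c \<Longrightarrow> e \<sqsubseteq> p"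
    using pc unfolding consecutive_in_def is_chain_def by auto
  have "z = p \<or> z = c" if z: "z \<in> carrier L" "p \<sqsubseteq> z" "z \<sqsubseteq> c" for z
  proof -
    have "d \<sqsubseteq> z \<or> z \<sqsubseteq> d" if d: "d \<in> C" for d
    proof -
      have dc: "d \<in> carrier L" using d chain unfolding is_chain_def by auto
      have "d \<sqsubset> c \<or> c \<sqsubseteq> d"
        using chain d pc unfolding is_chain_def consecutive_in_def by (auto simp: lless_eq)
      then show ?thesis using below_p[OF d] z carrier dc by (meson le_trans)
    qed
    then have "z \<in> C" using maximal_chain_mem[OF C z(1)] by blast
    then show ?thesis using below_p z carrier by (auto simp: lless_eq)
  qed
  then show ?thesis unfolding lower_cover_def using carrier \<open>p \<sqsubset> c\<close> by blast
qed

end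

context finite_lattice
begin

lemma dual_finite_lattice: "finite_lattice (inv_gorder L)"
  unfolding finite_lattice_def finite_lattice_axioms_def gorder_lattice_def
  using dual_lattice finite_carrier carrier_not_empty by simp

lemma chain_finite: "is_chain L D \<Longrightarrow> finite D"
  using finite_carrier unfolding is_chain_def by (meson finite_subset)

lemma chain_has_least:
  assumes "is_chain L D" "S \<subseteq> D" "S \<noteq> {}"
  shows "\<exists>m\<in>S. \<forall>x\<in>S. m \<sqsubseteq> x"
proof -
  have S: "S \<subseteq> carrier L" using assms unfolding is_chain_def by auto
  then have "finite S" using finite_carrier by (rule finite_subset)
  then obtain m where m: "m \<in> S" "\<And>z. \<lbrakk>z \<in> S; z \<sqsubseteq> m\<rbrakk> \<Longrightarrow> z = m"
    using finite_has_minimal[OF _ S assms(3)] by meson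
  have "m \<sqsubseteq> x" if "x \<in> S" for x
    using assms(1,2) m that S unfolding is_chain_def by (metis subsetD)
  then show ?thesis using m(1) by blast
qed

lemma chain_has_greatest:
  "\<lbrakk>is_chain L D; S \<subseteq> D; S \<noteq> {}\<rbrakk> \<Longrightarrow> \<exists>m\<in>S. \<forall>x\<in>S. x \<sqsubseteq> m"
  using finite_lattice.chain_has_least[OF dual_finite_lattice, of D S] by simp

lemma chain_predecessor:
  assumes "is_chain L D" "c \<in> D" "e \<in> D" "e \<sqsubset> c"
  shows "\<exists>p. consecutive_in L D p c"
  using chain_has_greatest[OF assms(1), of "{e \<in> D. e \<sqsubset> c}"] assms(2-4)
  unfolding consecutive_in_def by blast

lemma bottom_mem_maximal_chain: "maximal_chain L C \<Longrightarrow> \<bottom> \<in> C"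
  by (rule maximal_chain_mem) (auto simp: maximal_chain_def is_chain_def)

lemma top_mem_maximal_chain: "maximal_chain L C \<Longrightarrow> \<top> \<in> C"
  by (rule maximal_chain_mem) (auto simp: maximal_chain_def is_chain_def)

lemma finite_chain_cards: "finite {card D | D. is_chain L D}"
proof -
  have "{card D | D. is_chain L D} \<subseteq> card ` Pow (carrier L)" unfolding is_chain_def by auto
  then show ?thesis using finite_carrier by (meson finite_Pow_iff finite_imageI finite_subset)
qed

lemma chain_card_le_length: "is_chain L D \<Longrightarrow> card D \<le> lattice_length L + 1"
  unfolding lattice_length_def using Max_ge[OF finite_chain_cards] by fastforce

lemma longest_chain_exists:
  obtains D where "maximal_chain L D" "card D = lattice_length L + 1"
proof -
  obtain e where "e \<in> carrier L" using carrier_not_empty by blast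
  then have "is_chain L {e}" unfolding is_chain_def by simp
  then have "{card D | D. is_chain L D} \<noteq> {}" and one: "1 \<le> Max {card D | D. is_chain L D}"
    using Max_ge[OF finite_chain_cards] by fastforce+
  then obtain D where D: "is_chain L D" "card D = Max {card D | D. is_chain L D}"
    using Max_in[OF finite_chain_cards] by auto
  have "D' = D" if "is_chain L D'" "D \<subseteq> D'" for D'
  proof -
    have "finite D'" using that(1) finite_carrier unfolding is_chain_def by (meson finite_subset)
    moreover have "card D' \<le> card D" using that(1) D(2) Max_ge[OF finite_chain_cards] by auto
    ultimately show ?thesis using card_seteq[OF _ that(2)] by blast
  qed
  then have "maximal_chain L D" using D(1) unfolding maximal_chain_def by blast
  moreover have "card D = lattice_length L + 1" using D(2) one unfolding lattice_length_def by simp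
  ultimately show ?thesis by (rule that)
qed

end

subsection \<open>Join-irreducible labels\<close>

(* j is minimal among the elements below c and not below p; when p is a lower cover of c,
   these are the usual join-irreducible labels of the cover. *)
definition labels :: "'a gorder \<Rightarrow> 'a \<Rightarrow> 'a \<Rightarrow> 'a \<Rightarrow> bool" where
  "labels L j p c \<longleftrightarrow> j \<in> carrier L \<and> j \<sqsubseteq>\<^bsub>L\<^esub> c \<and> \<not> j \<sqsubseteq>\<^bsub>L\<^esub> p \<and>
     (\<forall>z\<in>carrier L. z \<sqsubset>\<^bsub>L\<^esub> j \<longrightarrow> z \<sqsubseteq>\<^bsub>L\<^esub> p)"

context gorder_lattice
begin

lemma labels_join_irreducible:
  assumes "p \<in> carrier L" and j: "labels L j p c"
  shows "join_irreducible L j"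
  unfolding join_irreducible_def
proof (intro conjI ballI impI)
  show "j \<in> carrier L" and "\<not> (\<forall>x\<in>carrier L. j \<sqsubseteq> x)"
    using assms unfolding labels_def by auto
next
  fix a b assume ab: "a \<in> carrier L" "b \<in> carrier L" and "j = a \<squnion> b"
  show "j = a \<or> j = b"
  proof (rule ccontr)
    assume "\<not> (j = a \<or> j = b)"
    then have "a \<sqsubset> j" "b \<sqsubset> j"
      using \<open>j = a \<squnion> b\<close> ab join_left join_right by (auto simp: lless_eq)
    then have "a \<squnion> b \<sqsubseteq> p" using j ab assms(1) unfolding labels_def by (simp add: join_le)
    then show False using j \<open>j = a \<squnion> b\<close> unfolding labels_def by simp
  qed
qed

lemma left_modular_labels:
  assumes p: "left_modular_elem L p" and cover: "lower_cover L p c"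
    and j: "join_irreducible L j" "j \<sqsubseteq> c" "\<not> j \<sqsubseteq> p"
  shows "labels L j p c"
  unfolding labels_def
proof (intro conjI ballI impI)
  have pc: "p \<in> carrier L" "c \<in> carrier L" "p \<sqsubseteq> c"
    using cover unfolding lower_cover_def by (auto simp: lless_eq)
  have jc: "j \<in> carrier L" using j unfolding join_irreducible_def by simp
  show "j \<in> carrier L" "j \<sqsubseteq> c" "\<not> j \<sqsubseteq> p" by fact+
  fix z assume z: "z \<in> carrier L" "z \<sqsubset> j"
  then have "z \<sqsubseteq> c" using jc pc j(2) by (meson lless_imp_le le_trans)
  then have "z \<squnion> p = p \<or> z \<squnion> p = c"
    using cover z(1) pc unfolding lower_cover_def by (simp add: join_le join_right)
  moreover have "z \<squnion> p \<noteq> c"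
  proof
    assume "z \<squnion> p = c"
    have "(z \<squnion> p) \<sqinter> j = z \<squnion> (p \<sqinter> j)"
      using p z unfolding left_modular_elem_def using jc by blast
    moreover have "(z \<squnion> p) \<sqinter> j = j"
      using \<open>z \<squnion> p = c\<close> j(2) jc pc by (metis le_iff_join meet_comm)
    moreover have "p \<sqinter> j \<noteq> j" using j(3) pc jc by (metis meet_left)
    ultimately show False
      using j z pc jc unfolding join_irreducible_def by (metis lless_eq meet_closed)
  qed
  ultimately show "z \<sqsubseteq> p" using z(1) pc by (metis join_left)
qed

lemma labels_lower_cover_join:
  assumes "lower_cover L p c" "labels L j p c"
  shows "p \<squnion> j = c"
proof -
  have carrier: "p \<in> carrier L" "c \<in> carrier L" "j \<in> carrier L" and "p \<sqsubseteq> c" "j \<sqsubseteq> c" "\<not> j \<sqsubseteq> p"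
    using assms unfolding lower_cover_def labels_def by (auto simp: lless_eq)
  then have "p \<squnion> j \<noteq> p" by (metis join_right)
  moreover have "p \<squnion> j \<sqsubseteq> c" "p \<sqsubseteq> p \<squnion> j"
    using carrier \<open>p \<sqsubseteq> c\<close> \<open>j \<sqsubseteq> c\<close> by (simp_all add: join_le join_left)
  ultimately show ?thesis
    using assms(1) join_closed[OF carrier(1,3)] unfolding lower_cover_def by blast
qed

lemma join_semidistributive_labels_unique:
  assumes jsd: "join_semidistributive L" and cover: "lower_cover L p c"
    and j: "labels L j p c" and j': "labels L j' p c"
  shows "j = j'"
proof -
  have below: "k \<sqsubseteq> k'" if k: "labels L k p c" and k': "labels L k' p c" for k k'
  proof -
    have carrier: "p \<in> carrier L" "c \<in> carrier L" "k \<in> carrier L" "k' \<in> carrier L" "p \<noteq> c"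
      using cover k k' unfolding lower_cover_def labels_def by (auto simp: lless_eq)
    have "p \<squnion> (k \<sqinter> k') = c"
      using join_semidistributiveD[OF jsd carrier(1,3,4)] labels_lower_cover_join[OF cover] k k'
      by simp
    then have "\<not> k \<sqinter> k' \<sqsubseteq> p" using carrier by (metis meet_closed le_iff_meet join_comm)
    then have "k \<sqinter> k' = k"
      using k carrier meet_left[of k k'] unfolding labels_def by (auto simp: lless_eq)
    then show ?thesis using carrier by (metis meet_right)
  qed
  show ?thesis using below[OF j j'] below[OF j' j] j j' unfolding labels_def by auto
qed

lemma modular_inequality:
  assumes "b \<in> carrier L" "x \<in> carrier L" "y \<in> carrier L" "b \<sqsubseteq> y"
  shows "b \<squnion> (x \<sqinter> y) \<sqsubseteq> (b \<squnion> x) \<sqinter> y"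
proof -
  have "b \<sqsubseteq> (b \<squnion> x) \<sqinter> y" using assms by (simp add: join_left meet_le)
  moreover have "x \<sqinter> y \<sqsubseteq> b \<squnion> x"
    using assms le_trans[OF meet_left join_right] by (meson join_closed meet_closed)
  then have "x \<sqinter> y \<sqsubseteq> (b \<squnion> x) \<sqinter> y" using assms by (simp add: meet_le meet_right)
  ultimately show ?thesis using assms by (simp add: join_le)
qed

lemma consecutive_labels_above:
  assumes chain: "is_chain L D" and "x \<in> D" and pc: "consecutive_in L D p c"
    and "labels L j p c" and "\<not> j \<sqsubseteq> x"
  shows "x \<sqsubseteq> p"
proof -
  have carrier: "x \<in> carrier L" "c \<in> carrier L" "j \<in> carrier L" and "j \<sqsubseteq> c"
    using assms unfolding is_chain_def consecutive_in_def labels_def by auto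
  then have "\<not> c \<sqsubseteq> x" using \<open>\<not> j \<sqsubseteq> x\<close> le_trans by blast
  then have "x \<sqsubset> c"
    using chain \<open>x \<in> D\<close> pc carrier unfolding is_chain_def consecutive_in_def lless_eq by auto
  then show ?thesis using pc \<open>x \<in> D\<close> unfolding consecutive_in_def by blast
qed

lemma labels_meet_eq:
  assumes "labels L j p c" "labels L j q d" "p \<in> carrier L" "q \<in> carrier L"
  shows "j \<sqinter> p = j \<sqinter> q"
proof -
  have below: "j \<sqinter> r \<sqsubseteq> j \<sqinter> s"
    if r: "labels L j r c'" "r \<in> carrier L" and s: "labels L j s d'" "s \<in> carrier L" for r s c' d'
  proof -
    have j: "j \<in> carrier L" "\<not> j \<sqsubseteq> r" using r unfolding labels_def by auto
    then have "j \<sqinter> r \<sqsubset> j" using r(2) meet_left[of j r] meet_right[of j r] by (auto simp: lless_eq)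
    then have "j \<sqinter> r \<sqsubseteq> s" using s j r(2) unfolding labels_def by simp
    then show ?thesis using j r(2) s(2) by (simp add: meet_le meet_left)
  qed
  have "j \<in> carrier L" using assms(1) unfolding labels_def by simp
  then show ?thesis
    using below[OF assms(1,3,2,4)] below[OF assms(2,4,1,3)] assms(3,4)
    by (metis le_antisym meet_closed)
qed

lemma meet_semidistributive_labels_not_below_join:
  assumes msd: "meet_semidistributive L"
    and "labels L j p c" "labels L j q d" "p \<in> carrier L" "q \<in> carrier L"
  shows "\<not> j \<sqsubseteq> p \<squnion> q"
proof
  assume "j \<sqsubseteq> p \<squnion> q"
  have j: "j \<in> carrier L" "\<not> j \<sqsubseteq> p" using assms(2) unfolding labels_def by auto
  have "j \<sqinter> (p \<squnion> q) = j \<sqinter> p"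
    using meet_semidistributiveD[OF msd j(1) assms(4,5)] labels_meet_eq[OF assms(2-5)] by simp
  moreover have "j \<sqinter> (p \<squnion> q) = j"
    using \<open>j \<sqsubseteq> p \<squnion> q\<close> j(1) assms(4,5) by (metis join_closed le_iff_join)
  ultimately show False using j assms(4) by (metis le_iff_join)
qed

end

context finite_lattice
begin

lemma finite_join_irreducibles: "finite {j. join_irreducible L j}"
  using finite_carrier by (rule finite_subset[rotated]) (auto simp: join_irreducible_def)

lemma labels_exist:
  assumes "p \<in> carrier L" "c \<in> carrier L" "\<not> c \<sqsubseteq> p"
  shows "\<exists>j. labels L j p c"
proof -
  let ?S = "{z \<in> carrier L. z \<sqsubseteq> c \<and> \<not> z \<sqsubseteq> p}"
  have S: "?S \<subseteq> carrier L" by blast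
  then have "finite ?S" using finite_carrier by (rule finite_subset)
  moreover have "?S \<noteq> {}" using assms by blast
  ultimately obtain j where j: "j \<in> ?S" and min: "\<And>z. \<lbrakk>z \<in> ?S; z \<sqsubseteq> j\<rbrakk> \<Longrightarrow> z = j"
    using finite_has_minimal[OF _ S] by meson
  have "z \<sqsubseteq> p" if z: "z \<in> carrier L" "z \<sqsubset> j" for z
  proof (rule ccontr)
    assume "\<not> z \<sqsubseteq> p"
    have "j \<in> carrier L" "j \<sqsubseteq> c" using j by simp_all
    then have "z \<sqsubseteq> c" using le_trans[OF lless_imp_le[OF z(2)] _ z(1) _ assms(2)] by blast
    then have "z \<in> ?S" using z(1) \<open>\<not> z \<sqsubseteq> p\<close> by simp
    then have "z = j" using min lless_imp_le[OF z(2)] by blast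
    then show False using z(2) by (simp add: lless_eq)
  qed
  then have "labels L j p c" using j unfolding labels_def by blast
  then show ?thesis ..
qed

lemma maximal_chain_labelling:
  assumes D: "maximal_chain L D"
  shows "\<exists>\<psi>. inj_on \<psi> (D - {\<bottom>}) \<and>
           (\<forall>d\<in>D - {\<bottom>}. \<exists>p. consecutive_in L D p d \<and> labels L (\<psi> d) p d)"
proof -
  have chain: "is_chain L D" and carrier: "D \<subseteq> carrier L"
    using D unfolding maximal_chain_def is_chain_def by auto
  have "\<forall>d\<in>D - {\<bottom>}. \<exists>j p. consecutive_in L D p d \<and> labels L j p d"
  proof
    fix d assume d: "d \<in> D - {\<bottom>}"
    then have "d \<in> carrier L" "\<bottom> \<sqsubset> d" using carrier by (auto simp: lless_eq)
    then obtain p where p: "consecutive_in L D p d"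
      using chain_predecessor[OF chain _ bottom_mem_maximal_chain[OF D]] d by blast
    then have "p \<in> carrier L" "\<not> d \<sqsubseteq> p"
      using carrier unfolding consecutive_in_def by (auto simp: lless_eq)
    then obtain j where "labels L j p d" using labels_exist \<open>d \<in> carrier L\<close> by blast
    then show "\<exists>j p. consecutive_in L D p d \<and> labels L j p d" using p by blast
  qed
  from bchoice[OF this] obtain \<psi>
    where \<psi>: "\<forall>d\<in>D - {\<bottom>}. \<exists>p. consecutive_in L D p d \<and> labels L (\<psi> d) p d"
    by blast
  have distinct: "\<psi> d \<noteq> \<psi> d'" if dd: "d \<in> D - {\<bottom>}" "d' \<in> D - {\<bottom>}" "d \<sqsubset> d'" for d d'
  proof -
    obtain p' where p': "consecutive_in L D p' d'" "labels L (\<psi> d') p' d'" using \<psi> dd(2) by blast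
    obtain p where "labels L (\<psi> d) p d" using \<psi> dd(1) by blast
    then have "\<psi> d \<sqsubseteq> d" "\<psi> d \<in> carrier L" unfolding labels_def by auto
    moreover have "d \<sqsubseteq> p'" "d \<in> carrier L" "p' \<in> carrier L"
      using p'(1) dd carrier unfolding consecutive_in_def by auto
    ultimately have "\<psi> d \<sqsubseteq> p'" by (blast intro: le_trans)
    then show ?thesis using p'(2) unfolding labels_def by auto
  qed
  have "inj_on \<psi> (D - {\<bottom>})"
  proof (rule inj_onI)
    fix d d' assume d: "d \<in> D - {\<bottom>}" "d' \<in> D - {\<bottom>}" and "\<psi> d = \<psi> d'"
    show "d = d'"
    proof (rule ccontr)
      assume "d \<noteq> d'"
      then have "d \<sqsubset> d' \<or> d' \<sqsubset> d" using chain d unfolding is_chain_def lless_eq by blast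
      then show False using distinct[OF d] distinct[OF d(2,1)] \<open>\<psi> d = \<psi> d'\<close> by auto
    qed
  qed
  then show ?thesis using \<psi> by blast
qed

lemma consecutive_labels_join_irreducible:
  "\<lbrakk>is_chain L D; consecutive_in L D p c; labels L j p c\<rbrakk> \<Longrightarrow> join_irreducible L j"
  by (rule labels_join_irreducible) (auto simp: is_chain_def consecutive_in_def)

lemma labelling_join_irreducible:
  assumes D: "maximal_chain L D"
    and \<psi>: "\<forall>d\<in>D - {\<bottom>}. \<exists>p. consecutive_in L D p d \<and> labels L (\<psi> d) p d"
  shows "\<psi> ` (D - {\<bottom>}) \<subseteq> {j. join_irreducible L j}"
proof
  fix j assume "j \<in> \<psi> ` (D - {\<bottom>})"
  then obtain p d where "consecutive_in L D p d" "labels L j p d" using \<psi> by blast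
  then show "j \<in> {j. join_irreducible L j}"
    using consecutive_labels_join_irreducible D unfolding maximal_chain_def by blast
qed

lemma card_maximal_chain_le: "maximal_chain L D \<Longrightarrow> card D \<le> card {j. join_irreducible L j} + 1"
proof -
  assume D: "maximal_chain L D"
  then obtain \<psi> where inj: "inj_on \<psi> (D - {\<bottom>})"
    and \<psi>: "\<forall>d\<in>D - {\<bottom>}. \<exists>p. consecutive_in L D p d \<and> labels L (\<psi> d) p d"
    using maximal_chain_labelling by blast
  have "\<psi> ` (D - {\<bottom>}) \<subseteq> {j. join_irreducible L j}"
    using labelling_join_irreducible[OF D \<psi>] .
  then have "card (D - {\<bottom>}) \<le> card {j. join_irreducible L j}"
    using card_inj_on_le[OF inj _ finite_join_irreducibles] by blast
  then show ?thesis by (simp add: bottom_mem_maximal_chain[OF D])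
qed

lemma length_le_card_join_irreducibles: "lattice_length L \<le> card {j. join_irreducible L j}"
proof -
  obtain D where "maximal_chain L D" "card D = lattice_length L + 1" by (rule longest_chain_exists)
  then show ?thesis using card_maximal_chain_le by fastforce
qed

subsection \<open>Left modularity and extremality\<close>

lemma card_join_irreducibles_le_left_modular_chain:
  assumes jsd: "join_semidistributive L" and C: "maximal_chain L C"
    and lm: "\<And>a. a \<in> C \<Longrightarrow> left_modular_elem L a"
  shows "card {j. join_irreducible L j} + 1 \<le> card C"
proof -
  have chain: "is_chain L C" and carrier: "C \<subseteq> carrier L"
    using C unfolding maximal_chain_def is_chain_def by auto
  have "\<forall>j\<in>{j. join_irreducible L j}.
          \<exists>c. c \<in> C - {\<bottom>} \<and> (\<forall>p. consecutive_in L C p c \<longrightarrow> labels L j p c)"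
  proof
    fix j assume "j \<in> {j. join_irreducible L j}"
    then have j: "join_irreducible L j" "j \<in> carrier L" unfolding join_irreducible_def by auto
    have "\<top> \<in> {c \<in> C. j \<sqsubseteq> c}" using top_mem_maximal_chain[OF C] j(2) by simp
    then obtain c where c: "c \<in> C" "j \<sqsubseteq> c" and least: "\<And>x. \<lbrakk>x \<in> C; j \<sqsubseteq> x\<rbrakk> \<Longrightarrow> c \<sqsubseteq> x"
      using chain_has_least[OF chain, of "{c \<in> C. j \<sqsubseteq> c}"] by blast
    have "c \<noteq> \<bottom>"
    proof
      assume "c = \<bottom>"
      have "j \<sqsubseteq> x" if "x \<in> carrier L" for x
        using le_trans[OF c(2)[unfolded \<open>c = \<bottom>\<close>] bottom_lower[OF that] j(2) bottom_closed that] .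
      then show False using j(1) unfolding join_irreducible_def by blast
    qed
    moreover have "labels L j p c" if p: "consecutive_in L C p c" for p
    proof (rule left_modular_labels[OF lm maximal_chain_consecutive_lower_cover[OF C p] j(1) c(2)])
      have "p \<in> C" "p \<sqsubseteq> c" "p \<noteq> c" using p unfolding consecutive_in_def lless_eq by auto
      then show "p \<in> C" "\<not> j \<sqsubseteq> p"
        using least[of p] c(1) carrier by auto
    qed
    ultimately show "\<exists>c. c \<in> C - {\<bottom>} \<and> (\<forall>p. consecutive_in L C p c \<longrightarrow> labels L j p c)"
      using c by blast
  qed
  from bchoice[OF this] obtain \<phi> where \<phi>: "\<forall>j\<in>{j. join_irreducible L j}.
      \<phi> j \<in> C - {\<bottom>} \<and> (\<forall>p. consecutive_in L C p (\<phi> j) \<longrightarrow> labels L j p (\<phi> j))"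
    by blast
  have "inj_on \<phi> {j. join_irreducible L j}"
  proof (rule inj_onI)
    fix j j' assume j: "j \<in> {j. join_irreducible L j}" "j' \<in> {j. join_irreducible L j}"
      and "\<phi> j = \<phi> j'"
    then have "\<phi> j \<in> C" "\<bottom> \<sqsubset> \<phi> j" using \<phi> carrier by (auto simp: lless_eq)
    then obtain p where p: "consecutive_in L C p (\<phi> j)"
      using chain_predecessor[OF chain _ bottom_mem_maximal_chain[OF C]] by blast
    have "labels L j p (\<phi> j)" "labels L j' p (\<phi> j)" using \<phi> j p \<open>\<phi> j = \<phi> j'\<close> by auto
    moreover have "lower_cover L p (\<phi> j)" by (rule maximal_chain_consecutive_lower_cover[OF C p])
    ultimately show "j = j'" using join_semidistributive_labels_unique[OF jsd] by blast
  qed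
  then have "card {j. join_irreducible L j} \<le> card (C - {\<bottom>})"
    using \<phi> chain_finite[OF chain] by (intro card_inj_on_le) auto
  moreover have "card (C - {\<bottom>}) = card C - 1" "0 < card C"
    using bottom_mem_maximal_chain[OF C] chain_finite[OF chain] card_gt_0_iff by auto
  ultimately show ?thesis by linarith
qed

theorem join_extremal_if_left_modular:
  assumes "join_semidistributive L" and "left_modular L"
  shows "join_extremal L"
proof -
  obtain C where C: "maximal_chain L C" "\<forall>a\<in>C. left_modular_elem L a"
    using assms(2) unfolding left_modular_def by blast
  then have "card {j. join_irreducible L j} + 1 \<le> card C"
    using card_join_irreducibles_le_left_modular_chain[OF assms(1)] by blast
  moreover have "card C \<le> lattice_length L + 1"
    using C(1) chain_card_le_length unfolding maximal_chain_def by blast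
  ultimately show ?thesis
    using length_le_card_join_irreducibles unfolding join_extremal_def by linarith
qed

lemma join_extremal_labels_longest_chain:
  assumes JE: "join_extremal L" and D: "maximal_chain L D" "card D = lattice_length L + 1"
    and j: "join_irreducible L j"
  shows "\<exists>p c. consecutive_in L D p c \<and> labels L j p c"
proof -
  obtain \<psi> where inj: "inj_on \<psi> (D - {\<bottom>})"
    and \<psi>: "\<forall>d\<in>D - {\<bottom>}. \<exists>p. consecutive_in L D p d \<and> labels L (\<psi> d) p d"
    using maximal_chain_labelling[OF D(1)] by blast
  have "card (\<psi> ` (D - {\<bottom>})) = card {j. join_irreducible L j}"
    using card_image[OF inj] D bottom_mem_maximal_chain[OF D(1)] JE unfolding join_extremal_def
    by simp
  then have "\<psi> ` (D - {\<bottom>}) = {j. join_irreducible L j}"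
    by (rule card_subset_eq[OF finite_join_irreducibles labelling_join_irreducible[OF D(1) \<psi>]])
  then obtain d where "d \<in> D - {\<bottom>}" "j = \<psi> d" using j by blast
  then show ?thesis using \<psi> by blast
qed

lemma left_modular_elem_if_labelled:
  assumes msd: "meet_semidistributive L" and chain: "is_chain L D" and x: "x \<in> D"
    and labelled: "\<And>j. join_irreducible L j \<Longrightarrow> \<exists>p c. consecutive_in L D p c \<and> labels L j p c"
  shows "left_modular_elem L x"
  unfolding left_modular_elem_def
proof (intro conjI ballI impI)
  have D: "D \<subseteq> carrier L" using chain unfolding is_chain_def by simp
  show xc: "x \<in> carrier L" using x D by blast
  fix b y assume b: "b \<in> carrier L" and y: "y \<in> carrier L" and "b \<sqsubset> y"
  define u where "u = (b \<squnion> x) \<sqinter> y"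
  define v where "v = b \<squnion> (x \<sqinter> y)"
  have uv: "u \<in> carrier L" "v \<in> carrier L" using b y xc unfolding u_def v_def by simp_all
  have "v \<sqsubseteq> u"
    unfolding u_def v_def using modular_inequality[OF b xc y lless_imp_le[OF \<open>b \<sqsubset> y\<close>]] .
  show "u = v"
  proof (rule ccontr)
    assume "u \<noteq> v"
    then have "\<not> u \<sqsubseteq> v" using \<open>v \<sqsubseteq> u\<close> uv le_antisym by blast
    then obtain j where jv: "labels L j v u" using labels_exist uv by blast
    then have jc: "j \<in> carrier L" and "j \<sqsubseteq> u" "\<not> j \<sqsubseteq> v" unfolding labels_def by auto
    obtain p c where pc: "consecutive_in L D p c" and jp: "labels L j p c"
      using labelled labels_join_irreducible[OF uv(2) jv] by blast
    have p: "p \<in> carrier L" using pc D unfolding consecutive_in_def by blast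
    note bx = join_closed[OF b xc] and xy = meet_closed[OF xc y] and vp = join_closed[OF uv(2) p]
    have "\<not> j \<sqsubseteq> x"
    proof
      assume "j \<sqsubseteq> x"
      have "u \<sqsubseteq> y" unfolding u_def by (rule meet_right[OF bx y])
      then have "j \<sqsubseteq> y" by (rule le_trans[OF \<open>j \<sqsubseteq> u\<close> _ jc uv(1) y])
      then have "j \<sqsubseteq> x \<sqinter> y" by (rule meet_le[OF \<open>j \<sqsubseteq> x\<close> _ xc y jc])
      moreover have "x \<sqinter> y \<sqsubseteq> v" unfolding v_def by (rule join_right[OF b xy])
      ultimately show False using le_trans[OF _ _ jc xy uv(2)] \<open>\<not> j \<sqsubseteq> v\<close> by blast
    qed
    then have "x \<sqsubseteq> p" by (rule consecutive_labels_above[OF chain x pc jp])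
    have "b \<sqsubseteq> v" unfolding v_def by (rule join_left[OF b xy])
    then have "b \<sqsubseteq> v \<squnion> p" by (rule le_trans[OF _ join_left[OF uv(2) p] b uv(2) vp])
    moreover have "x \<sqsubseteq> v \<squnion> p" by (rule le_trans[OF \<open>x \<sqsubseteq> p\<close> join_right[OF uv(2) p] xc p vp])
    ultimately have "b \<squnion> x \<sqsubseteq> v \<squnion> p" by (rule join_le[OF _ _ b xc vp])
    moreover have "u \<sqsubseteq> b \<squnion> x" unfolding u_def by (rule meet_left[OF bx y])
    ultimately have "j \<sqsubseteq> v \<squnion> p"
      using le_trans[OF \<open>j \<sqsubseteq> u\<close> _ jc uv(1) vp] le_trans bx uv(1) vp by blast
    then show False using meet_semidistributive_labels_not_below_join[OF msd jv jp uv(2) p] by simp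
  qed
qed

theorem left_modular_if_join_extremal:
  assumes "meet_semidistributive L" and "join_extremal L"
  shows "left_modular L"
proof -
  obtain D where D: "maximal_chain L D" "card D = lattice_length L + 1"
    by (rule longest_chain_exists)
  then have "\<forall>x\<in>D. left_modular_elem L x"
    using left_modular_elem_if_labelled[OF assms(1)]
      join_extremal_labels_longest_chain[OF assms(2) D]
    unfolding maximal_chain_def by blast
  then show ?thesis using D(1) unfolding left_modular_def by blast
qed

end

lemma left_modular_elem_dual:
  assumes "lattice L" and "left_modular_elem L a"
  shows "left_modular_elem (inv_gorder L) a"
proof -
  interpret lattice L by fact
  show ?thesis unfolding left_modular_elem_def
  proof (intro conjI ballI impI)
    show "a \<in> carrier (inv_gorder L)" using assms(2) unfolding left_modular_elem_def by simp
    fix b c assume "b \<in> carrier (inv_gorder L)" "c \<in> carrier (inv_gorder L)"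
      and "b \<sqsubset>\<^bsub>inv_gorder L\<^esub> c"
    then have "c \<sqsubset>\<^bsub>L\<^esub> b" "b \<in> carrier L" "c \<in> carrier L" by (auto simp: lless_def eq_is_equal)
    then have "(c \<squnion>\<^bsub>L\<^esub> a) \<sqinter>\<^bsub>L\<^esub> b = c \<squnion>\<^bsub>L\<^esub> (a \<sqinter>\<^bsub>L\<^esub> b)"
      using assms(2) unfolding left_modular_elem_def by blast
    then show "(b \<squnion>\<^bsub>inv_gorder L\<^esub> a) \<sqinter>\<^bsub>inv_gorder L\<^esub> c = b \<squnion>\<^bsub>inv_gorder L\<^esub> (a \<sqinter>\<^bsub>inv_gorder L\<^esub> c)"
      by (simp add: join_comm meet_comm)
  qed
qed

lemma left_modular_dual: "\<lbrakk>lattice L; left_modular L\<rbrakk> \<Longrightarrow> left_modular (inv_gorder L)"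
  unfolding left_modular_def using left_modular_elem_dual by fastforce

lemma join_extremal_dual [simp]: "join_extremal (inv_gorder L) \<longleftrightarrow> meet_extremal L"
  by (simp add: join_extremal_def meet_extremal_def join_irreducible_def meet_irreducible_def)

theorem (in finite_lattice) meet_extremal_if_left_modular:
  assumes "meet_semidistributive L" and "left_modular L"
  shows "meet_extremal L"
  using finite_lattice.join_extremal_if_left_modular[OF dual_finite_lattice]
    left_modular_dual[OF lattice_axioms] assms
  by simp

theorem corollary3p22:
  fixes L :: "'a gorder"
  assumes "fin_lattice L"
  shows "(join_congruence_uniform L \<and> left_modular L \<longrightarrow> join_extremal L)
       \<and> (meet_congruence_uniform L \<and> left_modular L \<longrightarrow> meet_extremal L)
       \<and> (congruence_uniform L \<longrightarrow> (extremal L \<longleftrightarrow> left_modular L))"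
proof -
  interpret finite_lattice L
    using assms unfolding fin_lattice_def finite_lattice_def finite_lattice_axioms_def
      gorder_lattice_def by simp
  show ?thesis
    using join_extremal_if_left_modular meet_extremal_if_left_modular left_modular_if_join_extremal
      join_congruence_uniform_join_semidistributive meet_congruence_uniform_meet_semidistributive
      congruence_uniform_semidistributive
    unfolding extremal_def by blast
qed

end
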